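(* Let $v_1,\dots,v_n\in\mathbb{R}^d$, let $x\in[0,1]^n$ with $\sum_{i=1}^n x(i)=q$ and $X=\sum_i x(i)v_iv_i^\top$ nonsingular. Let $S\subseteq[n]$ with $|S|=b$ be such that $Z=\sum_{i\in S}v_iv_i^\top$ is nonsingular, and let $Z'$ be a minimizer of $\operatorname{tr}((Z-v_iv_i^\top+v_jv_j^\top)^{-1})$ over all pairs $i\in S$, $j\in[n]\setminus S$ (singular matrices having value $+\infty$). For any $\varepsilon>0$, if \[ \operatorname{tr}(Z^{-1})\ge(1+\varepsilon)\operatorname{tr}(X^{-1})\quad\text{and}\quad b\ge q+2d+2(1+\varepsilon)\sqrt{\operatorname{tr}(X)\operatorname{tr}(X^{-1})}, \] then $\operatorname{tr}(Z'^{-1})\le\big(1-\frac{\varepsilon}{b}\big)\operatorname{tr}(Z^{-1})$. *)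

theory Defs
  imports "HOL-Analysis.Analysis"
begin

definition outer :: "real^'d \<Rightarrow> real^'d^'d" where
  "outer v = (\<chi> i j. v $ i * v $ j)"

definition inv_trace_cost :: "real^'d^'d \<Rightarrow> ereal" where
  "inv_trace_cost M = (if invertible M then ereal (trace (matrix_inv M)) else \<infinity>)"

end

theory Submission
  imports Defs
begin

(*
  Write W = Z^-1, tau_kl = v_k^T W v_l and h_kl = v_k^T W^2 v_l.  By the Sherman-Morrison-Woodbury
  formula, exchanging i in S for j outside S lowers tr(Z^-1) by N_ij / D_ij, where N_ij and D_ij are
  explicit in tau and h and D_ij > 0 whenever N_ij >= delta D_ij.  So it suffices to find a pair with
  N_ij >= delta D_ij for delta = eps tr(Z^-1) / b.  Such a pair exists because the average of
  N_ij - delta D_ij with weights (1 - x_i) x_j is nonnegative: the cross term 2 tau_ij h_ij is bounded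
  by AM-GM, sum_(i in S) tau_ij^2 = tau_jj and sum_(i in S) tau_ii = d, and the Cauchy-Schwarz
  inequality tr(Z^-1)^2 <= tr(Z^-2 X) tr(X^-1) combines with the two hypotheses into a scalar
  inequality between the resulting aggregates.
*)

definition outer_prod :: "real^'n \<Rightarrow> real^'n \<Rightarrow> real^'n^'n" where
  "outer_prod u w = (\<chi> i j. u $ i * w $ j)"

lemma outer_eq_outer_prod: "outer v = outer_prod v v"
  by (simp add: outer_def outer_prod_def)

lemma outer_prod_component [simp]: "outer_prod u w $ i $ j = u $ i * w $ j"
  by (simp add: outer_prod_def)

lemma matrix_mul_outer_prod: "(M::real^'n^'n) ** outer_prod u w = outer_prod (M *v u) w"
  by (simp add: vec_eq_iff matrix_matrix_mult_def matrix_vector_mult_def sum_distrib_right mult.assoc)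

lemma outer_prod_matrix_mul: "outer_prod u w ** (M::real^'n^'n) = outer_prod u (w v* M)"
  by (simp add: vec_eq_iff matrix_matrix_mult_def vector_matrix_mult_def sum_distrib_left
      mult.assoc mult.commute mult.left_commute)

lemma outer_prod_mult_vector: "outer_prod u w *v y = (w \<bullet> y) *\<^sub>R u"
  by (simp add: vec_eq_iff matrix_vector_mult_def inner_vec_def sum_distrib_left
      mult.commute mult.left_commute)

lemma trace_outer_prod: "trace (outer_prod u w) = u \<bullet> w"
  by (simp add: trace_def inner_vec_def)

lemma transpose_outer: "transpose (outer v) = outer v"
  by (simp add: outer_def transpose_def vec_eq_iff mult.commute)

lemma trace_scaleR: "trace (c *\<^sub>R (M::real^'n^'n)) = c * trace M"
  by (simp add: trace_def sum_distrib_left)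

lemma trace_sum: "trace (sum f A) = (\<Sum>i\<in>A. trace (f i :: real^'n^'n))"
  by (simp add: trace_def) (rule sum.swap)

lemma transpose_sum: "transpose (sum f A) = (\<Sum>i\<in>A. transpose (f i :: real^'n^'n))"
  by (simp add: transpose_def vec_eq_iff)

lemma matrix_mul_sum: "(M::real^'n^'n) ** sum f A = (\<Sum>i\<in>A. M ** f i)"
  by (induction A rule: infinite_finite_induct) (auto simp: matrix_add_ldistrib)

lemma sum_matrix_vector_mult: "sum f A *v (y::real^'n) = (\<Sum>i\<in>A. (f i :: real^'n^'n) *v y)"
  by (induction A rule: infinite_finite_induct) (auto simp: matrix_vector_mult_add_rdistrib)

lemma matrix_add_rdistrib: "((A::real^'n^'n) + B) ** C = A ** C + B ** C"
  by (simp add: vec_eq_iff matrix_matrix_mult_def sum.distrib distrib_right)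

lemma matrix_diff_rdistrib: "((A::real^'n^'n) - B) ** C = A ** C - B ** C"
  by (simp add: vec_eq_iff matrix_matrix_mult_def sum_subtractf left_diff_distrib)

lemma matrix_diff_ldistrib: "(C::real^'n^'n) ** (A - B) = C ** A - C ** B"
  by (simp add: vec_eq_iff matrix_matrix_mult_def sum_subtractf right_diff_distrib)

lemma inner_matrix_vector_mult_symmetric:
  assumes "transpose M = M"
  shows "(M *v a) \<bullet> b = a \<bullet> (M *v (b::real^'n))"
  by (metis assms dot_lmul_matrix transpose_matrix_vector)

lemma matrix_mul_scaleR: "(M::real^'n^'n) ** (c *\<^sub>R N) = c *\<^sub>R (M ** N)"
  by (simp add: matrix_scalar_ac scalar_matrix_assoc)

lemma trace_mul_weighted_outer_sum:
  fixes M :: "real^'n^'n"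
  shows "trace (M ** (\<Sum>k\<in>A. c k *\<^sub>R outer (v k))) = (\<Sum>k\<in>A. c k * (v k \<bullet> (M *v v k)))"
  by (simp add: matrix_mul_sum trace_sum matrix_mul_scaleR trace_scaleR outer_eq_outer_prod
      matrix_mul_outer_prod trace_outer_prod inner_commute)

lemma trace_mul_outer_sum:
  fixes M :: "real^'n^'n"
  shows "trace (M ** (\<Sum>k\<in>A. outer (v k))) = (\<Sum>k\<in>A. v k \<bullet> (M *v v k))"
  using trace_mul_weighted_outer_sum[of M "\<lambda>_. 1" v A] by simp

lemma matrix_inv:
  assumes "invertible (A::real^'n^'n)"
  shows matrix_inv_right: "A ** matrix_inv A = mat 1"
    and matrix_inv_left: "matrix_inv A ** A = mat 1"
proof -
  have "\<exists>A'. A ** A' = mat 1 \<and> A' ** A = mat 1" using assms invertible_def by blast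
  from someI_ex[OF this] show "A ** matrix_inv A = mat 1" "matrix_inv A ** A = mat 1"
    unfolding matrix_inv_def by auto
qed

lemma matrix_inv_unique:
  assumes "(A::real^'n^'n) ** B = mat 1"
  shows "invertible A" and "matrix_inv A = B"
proof -
  show inv: "invertible A" using assms invertible_right_inverse by blast
  have "matrix_inv A = matrix_inv A ** (A ** B)" using assms by simp
  also have "\<dots> = B" by (simp add: matrix_mul_assoc matrix_inv_left[OF inv])
  finally show "matrix_inv A = B" .
qed

lemma transpose_matrix_inv_symmetric:
  assumes "invertible (A::real^'n^'n)" and "transpose A = A"
  shows "transpose (matrix_inv A) = matrix_inv A"
proof -
  have "A ** transpose (matrix_inv A) = mat 1"
    by (metis assms matrix_inv_left matrix_transpose_mul transpose_mat)
  then show ?thesis using matrix_inv_unique(2) by metis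
qed

(* For W = Z^-1 this is the numerator of the Sherman-Morrison-Woodbury correction to W
   for the rank-two update Z - a a^T + c c^T. *)
definition rank_two_correction :: "real^'n^'n \<Rightarrow> real^'n \<Rightarrow> real^'n \<Rightarrow> real^'n^'n" where
  "rank_two_correction W a c =
     (1 + c \<bullet> (W *v c)) *\<^sub>R outer_prod (W *v a) (W *v a)
     - (a \<bullet> (W *v c)) *\<^sub>R outer_prod (W *v a) (W *v c)
     - (a \<bullet> (W *v c)) *\<^sub>R outer_prod (W *v c) (W *v a)
     - (1 - a \<bullet> (W *v a)) *\<^sub>R outer_prod (W *v c) (W *v c)"

lemma trace_rank_two_correction:
  "trace (rank_two_correction W a c) = (1 + c \<bullet> (W *v c)) * ((W *v a) \<bullet> (W *v a))
     - 2 * (a \<bullet> (W *v c)) * ((W *v a) \<bullet> (W *v c)) - (1 - a \<bullet> (W *v a)) * ((W *v c) \<bullet> (W *v c))"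
  by (simp add: rank_two_correction_def trace_sub trace_scaleR trace_outer_prod inner_commute)

lemma rank_two_update_right_inverse:
  fixes Z W :: "real^'n^'n" and a c :: "real^'n"
  assumes ZW: "Z ** W = mat 1" and W_sym: "transpose W = W"
  defines "D \<equiv> (1 - a \<bullet> (W *v a)) * (1 + c \<bullet> (W *v c)) + (a \<bullet> (W *v c))\<^sup>2"
  assumes D_nz: "D \<noteq> 0"
  shows "(Z - outer a + outer c) ** (W + (1 / D) *\<^sub>R rank_two_correction W a c) = mat 1"
proof -
  define p where "p = W *v a"
  define r where "r = W *v c"
  define Z2 where "Z2 = Z - outer a + outer c"
  have cp: "c \<bullet> p = a \<bullet> r"
    unfolding p_def r_def by (metis W_sym inner_commute inner_matrix_vector_mult_symmetric)
  have Zp: "Z *v p = a" and Zr: "Z *v r = c"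
    unfolding p_def r_def by (simp_all add: matrix_vector_mul_assoc ZW)
  have Z2p: "Z2 *v p = (1 - a \<bullet> p) *\<^sub>R a + (a \<bullet> r) *\<^sub>R c"
    unfolding Z2_def outer_eq_outer_prod by (simp add: Zp outer_prod_mult_vector cp algebra_simps)
  have Z2r: "Z2 *v r = (- (a \<bullet> r)) *\<^sub>R a + (1 + c \<bullet> r) *\<^sub>R c"
    unfolding Z2_def outer_eq_outer_prod by (simp add: Zr outer_prod_mult_vector algebra_simps)
  have Z2W: "Z2 ** W = mat 1 - outer_prod a p + outer_prod c r"
    using vector_transpose_matrix[of _ W]
    by (simp add: Z2_def outer_eq_outer_prod matrix_add_rdistrib matrix_diff_rdistrib ZW
        outer_prod_matrix_mul W_sym p_def r_def)
  have "Z2 ** rank_two_correction W a c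
      = (1 + c \<bullet> r) *\<^sub>R outer_prod (Z2 *v p) p - (a \<bullet> r) *\<^sub>R outer_prod (Z2 *v p) r
        - (a \<bullet> r) *\<^sub>R outer_prod (Z2 *v r) p - (1 - a \<bullet> p) *\<^sub>R outer_prod (Z2 *v r) r"
    unfolding rank_two_correction_def p_def[symmetric] r_def[symmetric]
    by (simp add: matrix_diff_ldistrib matrix_mul_scaleR matrix_mul_outer_prod)
  also have "\<dots> = D *\<^sub>R outer_prod a p - D *\<^sub>R outer_prod c r"
    unfolding Z2p Z2r D_def p_def[symmetric] r_def[symmetric]
    by (simp add: vec_eq_iff algebra_simps power2_eq_square)
  finally show ?thesis
    using D_nz unfolding Z2_def[symmetric]
    by (simp add: matrix_add_ldistrib matrix_mul_scaleR Z2W scaleR_right_diff_distrib)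
qed

lemma rank_two_update_inverse:
  fixes Z :: "real^'n^'n" and a c :: "real^'n"
  assumes Z_inv: "invertible Z" and Z_sym: "transpose Z = Z"
  defines "W \<equiv> matrix_inv Z"
  defines "D \<equiv> (1 - a \<bullet> (W *v a)) * (1 + c \<bullet> (W *v c)) + (a \<bullet> (W *v c))\<^sup>2"
  assumes D_nz: "D \<noteq> 0"
  shows "invertible (Z - outer a + outer c)"
    and "trace (matrix_inv (Z - outer a + outer c)) = trace W
           - ((W *v c) \<bullet> (W *v c) * (1 - a \<bullet> (W *v a)) - (W *v a) \<bullet> (W *v a) * (1 + c \<bullet> (W *v c))
              + 2 * (a \<bullet> (W *v c)) * ((W *v a) \<bullet> (W *v c))) / D"
proof -
  have ZW: "Z ** W = mat 1" unfolding W_def by (rule matrix_inv_right[OF Z_inv])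
  have W_sym: "transpose W = W" unfolding W_def by (rule transpose_matrix_inv_symmetric[OF Z_inv Z_sym])
  note right_inverse = rank_two_update_right_inverse[OF ZW W_sym D_nz[unfolded D_def], folded D_def]
  show "invertible (Z - outer a + outer c)"
    by (rule matrix_inv_unique(1)[OF right_inverse])
  show "trace (matrix_inv (Z - outer a + outer c)) = trace W
           - ((W *v c) \<bullet> (W *v c) * (1 - a \<bullet> (W *v a)) - (W *v a) \<bullet> (W *v a) * (1 + c \<bullet> (W *v c))
              + 2 * (a \<bullet> (W *v c)) * ((W *v a) \<bullet> (W *v c))) / D"
    using D_nz unfolding matrix_inv_unique(2)[OF right_inverse]
    by (simp add: trace_add trace_scaleR trace_rank_two_correction field_simps)
qed

lemma weighted_Cauchy_Schwarz:
  fixes f g :: "'a \<Rightarrow> 'b::real_inner"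
  assumes c_nonneg: "\<And>k. k \<in> A \<Longrightarrow> 0 \<le> c k"
  shows "(\<Sum>k\<in>A. c k * (f k \<bullet> g k))\<^sup>2 \<le> (\<Sum>k\<in>A. c k * (f k \<bullet> f k)) * (\<Sum>k\<in>A. c k * (g k \<bullet> g k))"
proof -
  define a where "a k = sqrt (c k) * norm (f k)" for k
  define b where "b k = sqrt (c k) * norm (g k)" for k
  have "\<bar>\<Sum>k\<in>A. c k * (f k \<bullet> g k)\<bar> \<le> (\<Sum>k\<in>A. \<bar>c k * (f k \<bullet> g k)\<bar>)"
    by (rule sum_abs)
  also have "\<dots> \<le> (\<Sum>k\<in>A. a k * b k)"
  proof (rule sum_mono)
    fix k assume "k \<in> A"
    then have "a k * b k = c k * (norm (f k) * norm (g k))"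
      using c_nonneg by (simp add: a_def b_def algebra_simps)
    then show "\<bar>c k * (f k \<bullet> g k)\<bar> \<le> a k * b k"
      using c_nonneg[OF \<open>k \<in> A\<close>] by (simp add: abs_mult Cauchy_Schwarz_ineq2 mult_left_mono)
  qed
  finally have "(\<Sum>k\<in>A. c k * (f k \<bullet> g k))\<^sup>2 \<le> (\<Sum>k\<in>A. a k * b k)\<^sup>2"
    by (metis abs_ge_zero power2_abs power_mono)
  also have "\<dots> \<le> (\<Sum>k\<in>A. (a k)\<^sup>2) * (\<Sum>k\<in>A. (b k)\<^sup>2)"
    by (rule Cauchy_Schwarz_ineq_sum)
  also have "\<dots> = (\<Sum>k\<in>A. c k * (f k \<bullet> f k)) * (\<Sum>k\<in>A. c k * (g k \<bullet> g k))"
    using c_nonneg by (simp add: a_def b_def power_mult_distrib power2_norm_eq_inner)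
  finally show ?thesis .
qed

lemma psd_quadratic_form_nonneg:
  fixes \<alpha> \<beta> \<gamma> y z :: real
  assumes "0 \<le> \<alpha>" and "\<beta>\<^sup>2 \<le> \<alpha> * \<gamma>" and "0 \<le> \<gamma>"
  shows "0 \<le> \<alpha> * y\<^sup>2 + 2 * \<beta> * y * z + \<gamma> * z\<^sup>2"
proof (cases "\<alpha> = 0")
  case True
  then show ?thesis using assms by simp
next
  case False
  then have "0 < \<alpha>" using assms(1) by simp
  have "\<alpha> * (\<alpha> * y\<^sup>2 + 2 * \<beta> * y * z + \<gamma> * z\<^sup>2) = (\<alpha> * y + \<beta> * z)\<^sup>2 + (\<alpha> * \<gamma> - \<beta>\<^sup>2) * z\<^sup>2"
    by (simp add: power2_eq_square algebra_simps)
  also have "\<dots> \<ge> 0" using assms(2) by simp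
  finally show ?thesis using \<open>0 < \<alpha>\<close> by (simp add: zero_le_mult_iff)
qed

lemma cross_term_lower_bound:
  fixes g hi hj t tj :: real
  assumes "g\<^sup>2 \<le> hi * hj" and "0 \<le> hi" and "0 \<le> hj" and "t\<^sup>2 \<le> tj"
  shows "- (t\<^sup>2 * (hj / tj) + hi * tj) \<le> 2 * t * g"
proof (cases "tj = 0")
  case True
  then show ?thesis using assms(4) by simp
next
  case False
  then have "0 < tj" using assms(4) by (metis order.not_eq_order_implies_strict zero_le_power2 order_trans)
  have "0 \<le> hj * t\<^sup>2 + 2 * g * t * tj + hi * tj\<^sup>2"
    using assms by (intro psd_quadratic_form_nonneg) (auto simp: mult.commute)
  also have "\<dots> = tj * (t\<^sup>2 * (hj / tj) + hi * tj + 2 * t * g)"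
    using \<open>0 < tj\<close> by (simp add: field_simps power2_eq_square)
  finally show ?thesis using \<open>0 < tj\<close> by (simp add: zero_le_mult_iff)
qed

lemma ex_nonneg_of_weighted_sum_nonneg:
  fixes c g :: "'a \<Rightarrow> real"
  assumes "finite A" and "\<And>k. k \<in> A \<Longrightarrow> 0 \<le> c k" and "a \<in> A" and "0 < c a"
    and "0 \<le> (\<Sum>k\<in>A. c k * g k)"
  shows "\<exists>k\<in>A. 0 \<le> g k"
proof (rule ccontr)
  assume "\<not> ?thesis"
  then have neg: "g k < 0" if "k \<in> A" for k
    using that by auto
  have "(\<Sum>k\<in>A. c k * g k) < (\<Sum>k\<in>A. 0)"
  proof (rule sum_strict_mono_ex1[OF assms(1)])
    show "\<forall>k\<in>A. c k * g k \<le> 0"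
      using assms(2) neg by (simp add: mult_nonneg_nonpos less_imp_le)
    show "\<exists>k\<in>A. c k * g k < 0"
      using assms(3,4) neg by (meson mult_pos_neg)
  qed
  then show False using assms(5) by simp
qed

lemma scaled_le_of_sq_le_mult:
  fixes \<epsilon> r w T :: real
  assumes "0 \<le> \<epsilon>" and "0 < r" and "(1 + \<epsilon>) * r \<le> w" and "w\<^sup>2 \<le> T * r"
  shows "(1 + \<epsilon>) * w \<le> T"
proof -
  have "0 < (1 + \<epsilon>) * r" using assms(1,2) by simp
  then have "0 < w" using assms(3) by linarith
  then have "(1 + \<epsilon>) * w * r \<le> w\<^sup>2"
    using mult_left_mono[OF assms(3), of w] by (simp add: power2_eq_square algebra_simps)
  then have "(1 + \<epsilon>) * w * r \<le> T * r" using assms(4) by linarith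
  then show ?thesis using assms(2) by simp
qed

lemma leverage_mass_bound:
  fixes \<epsilon> r w u H P s :: real
  assumes \<epsilon>: "0 < \<epsilon>" and r: "0 < r" and w_ge: "(1 + \<epsilon>) * r \<le> w" and w_sq: "w\<^sup>2 \<le> (u + H) * r"
    and u: "0 \<le> u" "u \<le> w" and H: "0 \<le> H" and P_sq: "P\<^sup>2 \<le> H * s"
  shows "((2 + \<epsilon>) * w - 2 * u) * P \<le> 2 * (1 + \<epsilon>) * H * sqrt (s * r)"
proof -
  have "0 \<le> w\<^sup>2 * (4 * \<epsilon> + 3 * \<epsilon>\<^sup>2) + 4 * u * (w - u)" using \<epsilon> u by simp
  then have "((2 + \<epsilon>) * w - 2 * u)\<^sup>2 \<le> 4 * (1 + \<epsilon>)\<^sup>2 * w\<^sup>2 - 4 * (1 + \<epsilon>) * u * w"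
    by (simp add: power2_eq_square algebra_simps)
  also have "\<dots> \<le> 4 * (1 + \<epsilon>)\<^sup>2 * (w\<^sup>2 - u * r)"
    using mult_left_mono[OF w_ge, of "4 * (1 + \<epsilon>) * u"] u \<epsilon>
    by (simp add: power2_eq_square algebra_simps)
  also have "\<dots> \<le> 4 * (1 + \<epsilon>)\<^sup>2 * (H * r)"
    using w_sq by (intro mult_left_mono) (auto simp: algebra_simps)
  finally have "(((2 + \<epsilon>) * w - 2 * u) * P)\<^sup>2 \<le> (4 * (1 + \<epsilon>)\<^sup>2 * (H * r)) * (H * s)"
    unfolding power_mult_distrib using P_sq H r by (intro mult_mono) auto
  also have "\<dots> = (2 * (1 + \<epsilon>) * H)\<^sup>2 * (s * r)"
    by (simp add: power2_eq_square algebra_simps)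
  finally have "((2 + \<epsilon>) * w - 2 * u) * P \<le> sqrt ((2 * (1 + \<epsilon>) * H)\<^sup>2 * (s * r))"
    by (rule real_le_rsqrt)
  also have "\<dots> = 2 * (1 + \<epsilon>) * H * sqrt (s * r)"
    using H \<epsilon> by (simp add: real_sqrt_mult)
  finally show ?thesis .
qed

lemma swap_gain_scalar_bound:
  fixes d b \<epsilon> w r s u H m P A q :: real
  assumes d: "1 \<le> d" and b: "0 < b" and \<epsilon>: "0 < \<epsilon>" and r: "0 < r"
    and w_ge: "(1 + \<epsilon>) * r \<le> w" and w_sq: "w\<^sup>2 \<le> (u + H) * r"
    and u: "0 \<le> u" "u \<le> w" and m: "0 \<le> m" and P: "0 \<le> P" and P_sq: "P\<^sup>2 \<le> H * s"
    and A: "b - q + m - d \<le> A" "A \<le> b - d"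
    and b_ge: "q + 2 * d + 2 * (1 + \<epsilon>) * sqrt (s * r) \<le> b"
  shows "(w - u) * (m + 2 * P) + \<epsilon> * w / b * (A * (m + P) + P) \<le> H * (A - 1)"
proof -
  have "0 < (1 + \<epsilon>) * r" using \<epsilon> r by simp
  then have w: "0 < w" using w_ge by linarith
  have "(1 + \<epsilon>) * w \<le> u + H" using less_imp_le[OF \<epsilon>] r w_ge w_sq by (rule scaled_le_of_sq_le_mult)
  then have H_ge: "(w - u) + \<epsilon> * w \<le> H" by (simp add: algebra_simps)
  then have H: "0 \<le> H" using u mult_pos_pos[OF \<epsilon> w] by linarith
  have \<delta>: "0 \<le> \<epsilon> * w / b" using b \<epsilon> w by simp
  have "A \<le> b" "A + 1 \<le> b" using A(2) d by auto
  then have "\<epsilon> * w / b * A \<le> \<epsilon> * w / b * b" and "\<epsilon> * w / b * (A + 1) \<le> \<epsilon> * w / b * b"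
    using \<delta> by (simp_all only: mult_left_mono)
  moreover have "\<epsilon> * w / b * b = \<epsilon> * w" using b by simp
  ultimately have "\<epsilon> * w / b * A \<le> \<epsilon> * w" and "\<epsilon> * w / b * (A + 1) \<le> \<epsilon> * w"
    by linarith+
  then have "\<epsilon> * w / b * A * m \<le> \<epsilon> * w * m" and "\<epsilon> * w / b * (A + 1) * P \<le> \<epsilon> * w * P"
    using m P by (blast intro: mult_right_mono)+
  moreover have "\<epsilon> * w / b * (A * (m + P) + P) = \<epsilon> * w / b * A * m + \<epsilon> * w / b * (A + 1) * P"
    by (simp add: algebra_simps add_divide_distrib)
  moreover have "((w - u) + \<epsilon> * w) * m \<le> H * m" using H_ge m by (rule mult_right_mono)
  moreover have "((2 + \<epsilon>) * w - 2 * u) * P \<le> 2 * (1 + \<epsilon>) * H * sqrt (s * r)"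
    using \<epsilon> r w_ge w_sq u H P_sq by (rule leverage_mass_bound)
  moreover have "H * (m + 2 * (1 + \<epsilon>) * sqrt (s * r)) \<le> H * (A - 1)"
    using A(1) b_ge d H by (intro mult_left_mono) auto
  ultimately show ?thesis by (simp add: algebra_simps)
qed

lemma weighted_column_sum_eq:
  fixes x h t :: "'a \<Rightarrow> real"
  shows "(\<Sum>j\<in>J. x j * (h j * A - (1 + 2 * t j) * B - h j - \<delta> * (1 + t j) * A - \<delta> * t j))
    = (\<Sum>j\<in>J. x j * h j) * (A - 1) - B * ((\<Sum>j\<in>J. x j) + 2 * (\<Sum>j\<in>J. x j * t j))
      - \<delta> * (A * ((\<Sum>j\<in>J. x j) + (\<Sum>j\<in>J. x j * t j)) + (\<Sum>j\<in>J. x j * t j))"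
proof -
  have "(\<Sum>j\<in>J. x j * (h j * A - (1 + 2 * t j) * B - h j - \<delta> * (1 + t j) * A - \<delta> * t j))
      = (\<Sum>j\<in>J. A * (x j * h j) - B * x j - (2 * B) * (x j * t j) - x j * h j
          - (\<delta> * A) * x j - (\<delta> * A) * (x j * t j) - \<delta> * (x j * t j))"
    by (intro sum.cong) (auto simp: algebra_simps)
  then show ?thesis
    by (simp only: sum_subtractf sum_distrib_left[symmetric]) (simp add: algebra_simps)
qed

lemma trace_sq_le_weighted_outer_sum:
  fixes W :: "real^'n^'n" and v :: "'a \<Rightarrow> real^'n"
  assumes x_nonneg: "\<And>k. k \<in> K \<Longrightarrow> 0 \<le> x k"
    and X_inv: "invertible (\<Sum>k\<in>K. x k *\<^sub>R outer (v k))" and W_sym: "transpose W = W"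
  shows "(trace W)\<^sup>2 \<le> (\<Sum>k\<in>K. x k * ((W *v v k) \<bullet> (W *v v k)))
           * trace (matrix_inv (\<Sum>k\<in>K. x k *\<^sub>R outer (v k)))"
proof -
  define X where "X = (\<Sum>k\<in>K. x k *\<^sub>R outer (v k))"
  define R where "R = matrix_inv X"
  have "transpose X = X"
    unfolding X_def by (simp add: transpose_sum transpose_scalar transpose_outer)
  then have R_sym: "transpose R = R"
    unfolding R_def using X_inv X_def transpose_matrix_inv_symmetric by blast
  have RX: "R ** X = mat 1" unfolding R_def X_def by (rule matrix_inv_left[OF X_inv])
  have trace_form: "trace (M ** N ** X) = (\<Sum>k\<in>K. x k * ((M *v v k) \<bullet> (N *v v k)))"
    if "transpose M = M" for M N :: "real^'n^'n"
    unfolding X_def trace_mul_weighted_outer_sum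
    by (simp add: inner_matrix_vector_mult_symmetric[OF that] matrix_vector_mul_assoc)
  have "trace W = (\<Sum>k\<in>K. x k * ((W *v v k) \<bullet> (R *v v k)))"
    using trace_form[OF W_sym, of R] RX by (simp add: matrix_mul_assoc[symmetric])
  moreover have "trace R = (\<Sum>k\<in>K. x k * ((R *v v k) \<bullet> (R *v v k)))"
    using trace_form[OF R_sym, of R] RX by (simp add: matrix_mul_assoc[symmetric])
  ultimately show ?thesis
    unfolding R_def[symmetric] X_def[symmetric] using x_nonneg by (simp add: weighted_Cauchy_Schwarz)
qed

locale design =
  fixes v :: "nat \<Rightarrow> real^'d" and S :: "nat set"
  assumes finite_S: "finite S" and invertible_Z: "invertible (\<Sum>i\<in>S. outer (v i))"
begin

abbreviation Z :: "real^'d^'d" where "Z \<equiv> \<Sum>i\<in>S. outer (v i)"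

abbreviation W :: "real^'d^'d" where "W \<equiv> matrix_inv Z"

definition tau :: "nat \<Rightarrow> nat \<Rightarrow> real" where "tau k l = v k \<bullet> (W *v v l)"

definition h :: "nat \<Rightarrow> nat \<Rightarrow> real" where "h k l = (W *v v k) \<bullet> (W *v v l)"

definition swap_num :: "nat \<Rightarrow> nat \<Rightarrow> real" where
  "swap_num i j = h j j * (1 - tau i i) - h i i * (1 + tau j j) + 2 * tau i j * h i j"

definition swap_den :: "nat \<Rightarrow> nat \<Rightarrow> real" where
  "swap_den i j = (1 - tau i i) * (1 + tau j j) + (tau i j)\<^sup>2"

lemma Z_symmetric: "transpose Z = Z"
  by (simp add: transpose_sum transpose_outer)

lemma W_symmetric: "transpose W = W"
  using invertible_Z Z_symmetric by (rule transpose_matrix_inv_symmetric)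

lemma Z_mult_W: "Z ** W = mat 1" and W_mult_Z: "W ** Z = mat 1"
  using invertible_Z by (simp_all add: matrix_inv_right matrix_inv_left)

lemma sum_tau_sq: "(\<Sum>k\<in>S. (tau k l)\<^sup>2) = tau l l"
proof -
  have "Z *v y = (\<Sum>k\<in>S. (v k \<bullet> y) *\<^sub>R v k)" for y
    by (simp add: sum_matrix_vector_mult outer_eq_outer_prod outer_prod_mult_vector)
  then have "(\<Sum>k\<in>S. (v k \<bullet> y)\<^sup>2) = y \<bullet> (Z *v y)" for y
    by (simp add: inner_sum_right power2_eq_square inner_commute)
  from this[of "W *v v l"] show ?thesis
    unfolding tau_def by (simp add: matrix_vector_mul_assoc Z_mult_W inner_commute)
qed

lemma tau_nonneg: "0 \<le> tau l l"
  unfolding sum_tau_sq[symmetric] by (simp add: sum_nonneg)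

lemma tau_sq_le: "i \<in> S \<Longrightarrow> (tau i l)\<^sup>2 \<le> tau l l"
  unfolding sum_tau_sq[symmetric, of l] by (rule member_le_sum) (auto simp: finite_S)

lemma tau_le_one:
  assumes "i \<in> S"
  shows "tau i i \<le> 1"
proof (cases "tau i i = 0")
  case False
  then have "0 < tau i i" using tau_nonneg[of i] by simp
  moreover have "tau i i * tau i i \<le> tau i i * 1"
    using tau_sq_le[OF assms, of i] by (simp add: power2_eq_square)
  ultimately show ?thesis by (simp add: mult_le_cancel_left_pos)
qed simp

lemma sum_tau: "(\<Sum>i\<in>S. tau i i) = real CARD('d)"
  using trace_mul_outer_sum[of W v S] by (simp add: W_mult_Z trace_I tau_def)

lemma h_nonneg: "0 \<le> h k k"
  by (simp add: h_def)

lemma h_Cauchy_Schwarz: "(h k l)\<^sup>2 \<le> h k k * h l l"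
  unfolding h_def by (rule Cauchy_Schwarz_ineq)

lemma sum_h: "(\<Sum>i\<in>S. h i i) = trace W"
proof -
  have "h k k = v k \<bullet> ((W ** W) *v v k)" for k
    unfolding h_def by (simp add: inner_matrix_vector_mult_symmetric[OF W_symmetric] matrix_vector_mul_assoc)
  then show ?thesis
    using trace_mul_outer_sum[of "W ** W" v S] by (simp add: matrix_mul_assoc[symmetric] W_mult_Z)
qed

lemma h_pos_if_tau_nonzero:
  assumes "tau i i \<noteq> 0"
  shows "0 < h i i"
proof -
  have "W *v v i \<noteq> 0" using assms unfolding tau_def by auto
  then show ?thesis unfolding h_def by simp
qed

lemma trace_W_pos: "0 < trace W"
proof -
  have "(\<Sum>i\<in>S. tau i i) \<noteq> 0" using sum_tau by simp
  then obtain i where i: "i \<in> S" and "tau i i \<noteq> 0" by (meson sum.neutral)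
  then have "0 < h i i" using h_pos_if_tau_nonzero by blast
  also have "h i i \<le> trace W"
    unfolding sum_h[symmetric] using i finite_S by (intro member_le_sum) (auto simp: h_nonneg)
  finally show ?thesis .
qed

lemma inv_trace_cost_swap:
  assumes "swap_den i j \<noteq> 0"
  shows "inv_trace_cost (Z - outer (v i) + outer (v j)) = ereal (trace W - swap_num i j / swap_den i j)"
proof -
  have "(1 - v i \<bullet> (W *v v i)) * (1 + v j \<bullet> (W *v v j)) + (v i \<bullet> (W *v v j))\<^sup>2 \<noteq> 0"
    using assms unfolding swap_den_def tau_def .
  note update = rank_two_update_inverse[OF invertible_Z Z_symmetric, OF this]
  show ?thesis
    unfolding inv_trace_cost_def swap_num_def swap_den_def tau_def h_def
    using update by (simp only: if_True)
qed

lemma swap_den_pos: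
  assumes i: "i \<in> S" and gain: "\<delta> * swap_den i j \<le> swap_num i j"
  shows "0 < swap_den i j"
proof (rule ccontr)
  assume "\<not> 0 < swap_den i j"
  moreover have "0 \<le> (1 - tau i i) * (1 + tau j j)"
    using tau_le_one[OF i] tau_nonneg[of j] by simp
  ultimately have "(1 - tau i i) * (1 + tau j j) = 0" and "(tau i j)\<^sup>2 = 0"
    unfolding swap_den_def using zero_le_power2[of "tau i j"] by linarith+
  then have "(1 - tau i i) * (1 + tau j j) = 0" and tau_ij: "tau i j = 0" by simp_all
  then have tau_ii: "tau i i = 1" using tau_nonneg[of j] by simp
  then have "swap_num i j = - h i i * (1 + tau j j)" and "swap_den i j = 0"
    unfolding swap_num_def swap_den_def using tau_ij by simp_all
  moreover have "0 < h i i * (1 + tau j j)"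
    using h_pos_if_tau_nonzero[of i] tau_ii tau_nonneg[of j] by simp
  ultimately show False using gain by simp
qed

lemma swap_gain_pair_bound:
  assumes "i \<in> S"
  shows "h j j * (1 - tau i i) - (1 + 2 * tau j j) * h i i - h j j / tau j j * (tau i j)\<^sup>2
           - \<delta> * (1 + tau j j) * (1 - tau i i) - \<delta> * (tau i j)\<^sup>2
         \<le> swap_num i j - \<delta> * swap_den i j"
proof -
  have "- ((tau i j)\<^sup>2 * (h j j / tau j j) + h i i * tau j j) \<le> 2 * tau i j * h i j"
    using h_Cauchy_Schwarz[of i j] h_nonneg[of i] h_nonneg[of j] tau_sq_le[OF assms, of j]
    by (rule cross_term_lower_bound)
  then show ?thesis unfolding swap_num_def swap_den_def by (simp add: algebra_simps)
qed

lemma swap_gain_column_bound: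
  assumes x: "\<And>i. i \<in> S \<Longrightarrow> 0 \<le> x i \<and> x i \<le> 1" and \<delta>: "0 \<le> \<delta>"
  defines "A \<equiv> \<Sum>i\<in>S. (1 - x i) * (1 - tau i i)" and "B \<equiv> \<Sum>i\<in>S. (1 - x i) * h i i"
  shows "h j j * A - (1 + 2 * tau j j) * B - h j j - \<delta> * (1 + tau j j) * A - \<delta> * tau j j
           \<le> (\<Sum>i\<in>S. (1 - x i) * (swap_num i j - \<delta> * swap_den i j))"
proof -
  define c where "c = h j j / tau j j"
  define E where "E = (\<Sum>i\<in>S. (1 - x i) * (tau i j)\<^sup>2)"
  define L where "L i = h j j * (1 - tau i i) - (1 + 2 * tau j j) * h i i - c * (tau i j)\<^sup>2
      - \<delta> * (1 + tau j j) * (1 - tau i i) - \<delta> * (tau i j)\<^sup>2" for i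
  have "L i \<le> swap_num i j - \<delta> * swap_den i j" if "i \<in> S" for i
    unfolding L_def c_def using that by (rule swap_gain_pair_bound)
  then have "(\<Sum>i\<in>S. (1 - x i) * L i) \<le> (\<Sum>i\<in>S. (1 - x i) * (swap_num i j - \<delta> * swap_den i j))"
    using x by (intro sum_mono mult_left_mono) auto
  moreover have "(\<Sum>i\<in>S. (1 - x i) * L i)
      = h j j * A - (1 + 2 * tau j j) * B - c * E - \<delta> * (1 + tau j j) * A - \<delta> * E"
  proof -
    have "(\<Sum>i\<in>S. (1 - x i) * L i) = (\<Sum>i\<in>S. h j j * ((1 - x i) * (1 - tau i i))
        - (1 + 2 * tau j j) * ((1 - x i) * h i i) - c * ((1 - x i) * (tau i j)\<^sup>2)
        - \<delta> * (1 + tau j j) * ((1 - x i) * (1 - tau i i)) - \<delta> * ((1 - x i) * (tau i j)\<^sup>2))"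
      unfolding L_def by (intro sum.cong) (auto simp: algebra_simps)
    then show ?thesis unfolding A_def B_def E_def by (simp add: sum_subtractf sum_distrib_left)
  qed
  moreover have E_le: "E \<le> tau j j"
  proof -
    have "E \<le> (\<Sum>i\<in>S. (tau i j)\<^sup>2)"
      unfolding E_def using x by (intro sum_mono) (simp add: mult_left_le_one_le)
    then show ?thesis by (simp add: sum_tau_sq)
  qed
  moreover have "c * E \<le> h j j"
  proof (cases "tau j j = 0")
    case False
    then have "0 < tau j j" using tau_nonneg[of j] by simp
    then have "c * E \<le> c * tau j j" using E_le h_nonneg[of j] unfolding c_def by (intro mult_left_mono) auto
    then show ?thesis using \<open>0 < tau j j\<close> unfolding c_def by simp
  qed (simp add: c_def h_nonneg)
  moreover have "\<delta> * E \<le> \<delta> * tau j j" using E_le \<delta> by (rule mult_left_mono)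
  ultimately show ?thesis by linarith
qed

end

locale fractional_design = design v S for v :: "nat \<Rightarrow> real^'d" and S :: "nat set" +
  fixes x :: "nat \<Rightarrow> real" and n :: nat
  assumes x_range: "\<And>k. k < n \<Longrightarrow> 0 \<le> x k \<and> x k \<le> 1"
    and S_subset: "S \<subseteq> {..<n}"
    and invertible_X: "invertible (\<Sum>k<n. x k *\<^sub>R outer (v k))"
begin

abbreviation X :: "real^'d^'d" where "X \<equiv> \<Sum>k<n. x k *\<^sub>R outer (v k)"

abbreviation outside :: "nat set" where "outside \<equiv> {..<n} - S"

lemma x_range_S: "i \<in> S \<Longrightarrow> 0 \<le> x i \<and> x i \<le> 1"
  using x_range S_subset by auto

lemma x_range_outside: "j \<in> outside \<Longrightarrow> 0 \<le> x j \<and> x j \<le> 1"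
  using x_range by auto

lemma sum_split: "(\<Sum>k<n. f k) = (\<Sum>k\<in>S. f k) + (\<Sum>k\<in>outside. f k)"
  using sum.subset_diff[OF S_subset, of f] by (simp add: add.commute)

lemma trace_W_sq_le:
  "(trace W)\<^sup>2 \<le> ((\<Sum>i\<in>S. x i * h i i) + (\<Sum>j\<in>outside. x j * h j j)) * trace (matrix_inv X)"
proof -
  have "(trace W)\<^sup>2 \<le> (\<Sum>k<n. x k * h k k) * trace (matrix_inv X)"
    unfolding h_def using x_range invertible_X W_symmetric
    by (intro trace_sq_le_weighted_outer_sum) auto
  then show ?thesis unfolding sum_split[of "\<lambda>k. x k * h k k"] .
qed

lemma trace_matrix_inv_X_pos: "0 < trace (matrix_inv X)"
proof -
  have "0 < ((\<Sum>i\<in>S. x i * h i i) + (\<Sum>j\<in>outside. x j * h j j)) * trace (matrix_inv X)"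
    using trace_W_sq_le trace_W_pos by (smt (verit) zero_less_power2)
  moreover have "0 \<le> (\<Sum>i\<in>S. x i * h i i) + (\<Sum>j\<in>outside. x j * h j j)"
    using x_range_S x_range_outside h_nonneg by (intro add_nonneg_nonneg sum_nonneg) auto
  ultimately show ?thesis by (simp add: zero_less_mult_iff)
qed

lemma trace_X: "trace X = (\<Sum>k<n. x k * (v k \<bullet> v k))"
  using trace_mul_weighted_outer_sum[of "mat 1" x v "{..<n}"] by simp

lemma trace_X_nonneg: "0 \<le> trace X"
  unfolding trace_X using x_range by (intro sum_nonneg) auto

lemma outside_tau_sq_le: "(\<Sum>j\<in>outside. x j * tau j j)\<^sup>2 \<le> (\<Sum>j\<in>outside. x j * h j j) * trace X"
proof -
  have "(\<Sum>j\<in>outside. x j * tau j j)\<^sup>2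
      \<le> (\<Sum>j\<in>outside. x j * (v j \<bullet> v j)) * (\<Sum>j\<in>outside. x j * h j j)"
    unfolding tau_def h_def using x_range_outside by (intro weighted_Cauchy_Schwarz) auto
  also have "\<dots> \<le> trace X * (\<Sum>j\<in>outside. x j * h j j)"
  proof (rule mult_right_mono)
    show "(\<Sum>j\<in>outside. x j * (v j \<bullet> v j)) \<le> trace X"
      unfolding trace_X sum_split[of "\<lambda>k. x k * (v k \<bullet> v k)"] using x_range_S by (simp add: sum_nonneg)
    show "0 \<le> (\<Sum>j\<in>outside. x j * h j j)"
      using x_range_outside h_nonneg by (intro sum_nonneg) auto
  qed
  finally show ?thesis by (simp add: mult.commute)
qed

lemma complement_leverage_bounds:
  defines "A \<equiv> \<Sum>i\<in>S. (1 - x i) * (1 - tau i i)"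
  shows "real (card S) - (\<Sum>k<n. x k) + (\<Sum>j\<in>outside. x j) - real CARD('d) \<le> A"
    and "A \<le> real (card S) - real CARD('d)"
proof -
  have "A = card S - (\<Sum>i\<in>S. x i) - (\<Sum>i\<in>S. tau i i) + (\<Sum>i\<in>S. x i * tau i i)"
    unfolding A_def by (simp add: algebra_simps sum.distrib sum_subtractf)
  moreover have "0 \<le> (\<Sum>i\<in>S. x i * tau i i)"
    using x_range_S tau_nonneg by (intro sum_nonneg) auto
  moreover have "(\<Sum>i\<in>S. x i * tau i i) \<le> (\<Sum>i\<in>S. x i)"
    using x_range_S tau_le_one by (intro sum_mono) (simp add: mult_left_le)
  ultimately show "real (card S) - (\<Sum>k<n. x k) + (\<Sum>j\<in>outside. x j) - real CARD('d) \<le> A"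
    and "A \<le> real (card S) - real CARD('d)"
    unfolding sum_split[of x] sum_tau by linarith+
qed

end

locale swap_hypotheses = fractional_design v S x n
  for v :: "nat \<Rightarrow> real^'d" and S :: "nat set" and x :: "nat \<Rightarrow> real" and n :: nat +
  fixes \<epsilon> :: real
  assumes eps_pos: "0 < \<epsilon>"
    and trace_gap: "(1 + \<epsilon>) * trace (matrix_inv X) \<le> trace W"
    and card_S_large: "(\<Sum>k<n. x k) + 2 * real CARD('d)
                         + 2 * (1 + \<epsilon>) * sqrt (trace X * trace (matrix_inv X)) \<le> real (card S)"
begin

lemma sum_x_le_card_S: "(\<Sum>k<n. x k) + 2 \<le> real (card S)"
proof -
  have "0 \<le> 2 * (1 + \<epsilon>) * sqrt (trace X * trace (matrix_inv X))"
    using eps_pos trace_X_nonneg trace_matrix_inv_X_pos by simp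
  moreover have "1 \<le> real CARD('d)" by (simp add: Suc_le_eq)
  ultimately show ?thesis using card_S_large by linarith
qed

lemma card_S_pos: "0 < real (card S)"
proof -
  have "0 \<le> (\<Sum>k<n. x k)" using x_range by (intro sum_nonneg) auto
  then show ?thesis using sum_x_le_card_S by linarith
qed

lemma sum_h_inside_le: "(\<Sum>i\<in>S. x i * h i i) \<le> trace W"
  unfolding sum_h[symmetric] using x_range_S h_nonneg by (intro sum_mono) (simp add: mult_left_le_one_le)

lemma averaged_swap_gain_nonneg:
  "0 \<le> (\<Sum>j\<in>outside. x j * (\<Sum>i\<in>S. (1 - x i)
          * (swap_num i j - \<epsilon> * trace W / card S * swap_den i j)))"
proof -
  define \<delta> where "\<delta> = \<epsilon> * trace W / card S"
  define A where "A = (\<Sum>i\<in>S. (1 - x i) * (1 - tau i i))"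
  define u where "u = (\<Sum>i\<in>S. x i * h i i)"
  define H where "H = (\<Sum>j\<in>outside. x j * h j j)"
  define m where "m = (\<Sum>j\<in>outside. x j)"
  define P where "P = (\<Sum>j\<in>outside. x j * tau j j)"
  define F where "F j = h j j * A - (1 + 2 * tau j j) * (trace W - u) - h j j
                        - \<delta> * (1 + tau j j) * A - \<delta> * tau j j" for j
  have "(trace W - u) * (m + 2 * P) + \<delta> * (A * (m + P) + P) \<le> H * (A - 1)"
    unfolding \<delta>_def
  proof (rule swap_gain_scalar_bound[where d = "real CARD('d)" and q = "\<Sum>k<n. x k"])
    show "(trace W)\<^sup>2 \<le> (u + H) * trace (matrix_inv X)"
      unfolding u_def H_def by (rule trace_W_sq_le)
    show "P\<^sup>2 \<le> H * trace X"
      unfolding P_def H_def by (rule outside_tau_sq_le)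
    show "real (card S) - (\<Sum>k<n. x k) + m - real CARD('d) \<le> A" "A \<le> real (card S) - real CARD('d)"
      unfolding m_def A_def by (rule complement_leverage_bounds)+
  qed (use eps_pos card_S_pos trace_matrix_inv_X_pos trace_gap trace_X_nonneg card_S_large
         sum_h_inside_le x_range_S x_range_outside h_nonneg tau_nonneg
       in \<open>auto simp: u_def m_def P_def intro!: sum_nonneg\<close>)
  moreover have "(\<Sum>j\<in>outside. x j * F j) = H * (A - 1) - (trace W - u) * (m + 2 * P) - \<delta> * (A * (m + P) + P)"
    unfolding F_def H_def m_def P_def by (rule weighted_column_sum_eq)
  moreover have "(\<Sum>j\<in>outside. x j * F j)
      \<le> (\<Sum>j\<in>outside. x j * (\<Sum>i\<in>S. (1 - x i) * (swap_num i j - \<delta> * swap_den i j)))"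
  proof -
    have "(\<Sum>i\<in>S. (1 - x i) * h i i) = trace W - u"
      unfolding u_def sum_h[symmetric] by (simp add: sum_subtractf algebra_simps)
    then show ?thesis
      using x_range_outside swap_gain_column_bound[where x = x and \<delta> = \<delta>, OF x_range_S]
        eps_pos card_S_pos trace_W_pos
      unfolding F_def A_def by (intro sum_mono mult_left_mono) (auto simp: \<delta>_def)
  qed
  ultimately show ?thesis unfolding \<delta>_def by linarith
qed

lemma exists_improving_swap: "\<exists>i\<in>S. \<exists>j\<in>outside. \<epsilon> * trace W / card S * swap_den i j \<le> swap_num i j"
proof -
  define G where "G i j = swap_num i j - \<epsilon> * trace W / card S * swap_den i j" for i j
  have "(1 + \<epsilon>) * trace W \<le> (\<Sum>i\<in>S. x i * h i i) + (\<Sum>j\<in>outside. x j * h j j)"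
    using less_imp_le[OF eps_pos] trace_matrix_inv_X_pos trace_gap trace_W_sq_le
    by (rule scaled_le_of_sq_le_mult)
  moreover have "(1 + \<epsilon>) * trace W = trace W + \<epsilon> * trace W" by (simp add: algebra_simps)
  moreover have "0 < \<epsilon> * trace W" using eps_pos trace_W_pos by simp
  ultimately have "(\<Sum>j\<in>outside. x j * h j j) \<noteq> 0" using sum_h_inside_le by linarith
  then obtain j0 where j0: "j0 \<in> outside" "x j0 * h j0 j0 \<noteq> 0" by (meson sum.neutral)
  then have "0 < x j0" using x_range_outside[of j0] by auto
  have "\<exists>i\<in>S. x i < 1"
  proof (rule ccontr)
    assume "\<not> ?thesis"
    then have "(\<Sum>i\<in>S. x i) = (\<Sum>i\<in>S. 1)"
      using x_range_S by (intro sum.cong) (auto intro: antisym simp: not_less)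
    moreover have "0 \<le> (\<Sum>j\<in>outside. x j)" using x_range_outside by (intro sum_nonneg) auto
    ultimately show False using sum_x_le_card_S unfolding sum_split[of x] by simp
  qed
  then obtain i0 where i0: "i0 \<in> S" "x i0 < 1" by blast
  have "(\<Sum>p\<in>S \<times> outside. (1 - x (fst p)) * x (snd p) * G (fst p) (snd p))
      = (\<Sum>i\<in>S. \<Sum>j\<in>outside. (1 - x i) * x j * G i j)"
    by (simp only: sum.cartesian_product split_def)
  also have "\<dots> = (\<Sum>j\<in>outside. x j * (\<Sum>i\<in>S. (1 - x i) * G i j))"
    by (subst sum.swap) (simp add: sum_distrib_left mult_ac)
  also have "0 \<le> \<dots>"
    unfolding G_def by (rule averaged_swap_gain_nonneg)
  finally have "\<exists>p\<in>S \<times> outside. 0 \<le> G (fst p) (snd p)"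
    using finite_S i0 j0 \<open>0 < x j0\<close> x_range_S x_range_outside
    by (intro ex_nonneg_of_weighted_sum_nonneg[where a = "(i0, j0)"]) auto
  then show ?thesis unfolding G_def by auto
qed

end

theorem proposition3p8:
  fixes v :: "nat \<Rightarrow> real^'d" and x :: "nat \<Rightarrow> real" and n b :: nat
    and q \<epsilon> :: real and S :: "nat set" and X Z Z' :: "real^'d^'d"
  assumes x_range: "\<forall>i<n. 0 \<le> x i \<and> x i \<le> 1"
    and q_def: "q = (\<Sum>i<n. x i)"
    and X_def: "X = (\<Sum>i<n. x i *\<^sub>R outer (v i))"
    and X_inv: "invertible X"
    and S_sub: "S \<subseteq> {..<n}"
    and S_card: "card S = b"
    and Z_def: "Z = (\<Sum>i\<in>S. outer (v i))"
    and Z_inv: "invertible Z"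
    and Z'_cand: "\<exists>i\<in>S. \<exists>j\<in>{..<n} - S. Z' = Z - outer (v i) + outer (v j)"
    and Z'_min: "\<forall>i\<in>S. \<forall>j\<in>{..<n} - S.
                   inv_trace_cost Z' \<le> inv_trace_cost (Z - outer (v i) + outer (v j))"
    and eps_pos: "\<epsilon> > 0"
    and hyp1: "trace (matrix_inv Z) \<ge> (1 + \<epsilon>) * trace (matrix_inv X)"
    and hyp2: "real b \<ge> q + 2 * real CARD('d)
                 + 2 * (1 + \<epsilon>) * sqrt (trace X * trace (matrix_inv X))"
  shows "inv_trace_cost Z' \<le> ereal ((1 - \<epsilon> / real b) * trace (matrix_inv Z))"
proof -
  interpret D: swap_hypotheses v S x n \<epsilon>
    by unfold_locales (use S_sub finite_subset Z_inv X_inv x_range eps_pos hyp1 hyp2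
        in \<open>auto simp: Z_def X_def q_def S_card\<close>)
  obtain i j where i: "i \<in> S" and j: "j \<in> {..<n} - S"
    and gain: "\<epsilon> * trace (matrix_inv Z) / b * D.swap_den i j \<le> D.swap_num i j"
    using D.exists_improving_swap unfolding S_card Z_def by blast
  have den: "0 < D.swap_den i j" using i gain by (rule D.swap_den_pos)
  then have "\<epsilon> * trace (matrix_inv Z) / b \<le> D.swap_num i j / D.swap_den i j"
    using gain by (simp add: pos_le_divide_eq)
  have "inv_trace_cost Z' \<le> inv_trace_cost (Z - outer (v i) + outer (v j))"
    using Z'_min i j by blast
  also have "\<dots> = ereal (trace (matrix_inv Z) - D.swap_num i j / D.swap_den i j)"
    unfolding Z_def using den by (simp add: D.inv_trace_cost_swap)
  also have "\<dots> \<le> ereal ((1 - \<epsilon> / real b) * trace (matrix_inv Z))"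
    using \<open>\<epsilon> * trace (matrix_inv Z) / b \<le> _\<close> by (simp add: algebra_simps)
  finally show ?thesis .
qed

end
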